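(* Let $\mathcal{A}_1,\mathcal{A}_2$ be cyclic finite automata each with at most $m$ states, let $d$ be a multiple of $(m^2)!$, and let $v\in(\Sigma^d)^*$. If $\downarrow_{\preceq_d}v^*\in\mathrm{Adh}_{\preceq_d}(L(\mathcal{A}_i))$ for $i=1,2$, then there is $w\in(\Sigma^d)^*$ such that (i) $\downarrow_{\preceq_d}v^*\subseteq\downarrow_{\preceq_d}w^*$, (ii) $\downarrow_{\preceq_d}w^*\in\mathrm{Adh}_{\preceq_d}(L(\mathcal{A}_i))$ for $i=1,2$, and (iii) $\pi_d(w)\le m^2$.
   Context: A finite automaton is cyclic if it has exactly one initial state and its set of final states equals its set of initial states. $u\preceq_d v$ iff $u=u_0\cdots u_n$ and $v=u_0v_1u_1\cdots v_nu_n$ with every $|v_i|$ divisible by $d$. An ideal is a nonempty, downward closed, directed set; $\mathrm{Adh}_{\preceq_d}(L)$ is the set of $\preceq_d$-ideals $I$ with $I\subseteq\downarrow_{\preceq_d}(L\cap I)$. For $w\in\Sigma^*$ and $i\in[1,d]$, $\kappa_d(w)(i)$ is the set of letters occurring in $w$ at a position $p\equiv i\pmod d$ (positions from $1$). $\pi_d(w)$ is the smallest $t\in[1,d]$ dividing $d$ such that $\kappa_d(w)(i+t)=\kappa_d(w)(i)$ for all $i\in[1,d-t]$. *)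

theory Defs
  imports Main
begin

record ('q, 'a) nfa =
  states :: "'q set"
  init   :: "'q set"
  final  :: "'q set"
  trans  :: "('q \<times> 'a \<times> 'q) set"

definition wf_nfa :: "('q, 'a) nfa \<Rightarrow> bool" where
  "wf_nfa A \<longleftrightarrow> finite (states A) \<and> init A \<subseteq> states A \<and> final A \<subseteq> states A
     \<and> (\<forall>(p, a, q) \<in> trans A. p \<in> states A \<and> q \<in> states A)"

fun run :: "('q, 'a) nfa \<Rightarrow> 'q \<Rightarrow> 'a list \<Rightarrow> 'q \<Rightarrow> bool" where
  "run A p [] q \<longleftrightarrow> p = q"
| "run A p (a # w) q \<longleftrightarrow> (\<exists>p'. (p, a, p') \<in> trans A \<and> run A p' w q)"

definition lang :: "('q, 'a) nfa \<Rightarrow> 'a list set" where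
  "lang A = {w. \<exists>p \<in> init A. \<exists>q \<in> final A. run A p w q}"

definition cyclic :: "('q, 'a) nfa \<Rightarrow> bool" where
  "cyclic A \<longleftrightarrow> card (init A) = 1 \<and> final A = init A"

text \<open>u \<preceq>_d v iff u = u0...un and v = u0 v1 u1 ... vn un with d dividing every |vi|.\<close>
definition subword_d :: "nat \<Rightarrow> 'a list \<Rightarrow> 'a list \<Rightarrow> bool" where
  "subword_d d u v \<longleftrightarrow> (\<exists>us vs. length us = length vs + 1 \<and> u = concat us \<and>
      v = hd us @ concat (map (\<lambda>(vi, ui). vi @ ui) (zip vs (tl us))) \<and>
      (\<forall>x \<in> set vs. d dvd length x))"

definition down_d :: "nat \<Rightarrow> 'a list set \<Rightarrow> 'a list set" where
  "down_d d L = {u. \<exists>v \<in> L. subword_d d u v}"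

definition ideal_d :: "nat \<Rightarrow> 'a list set \<Rightarrow> bool" where
  "ideal_d d I \<longleftrightarrow> I \<noteq> {} \<and> (\<forall>u v. v \<in> I \<longrightarrow> subword_d d u v \<longrightarrow> u \<in> I)
     \<and> (\<forall>x \<in> I. \<forall>y \<in> I. \<exists>z \<in> I. subword_d d x z \<and> subword_d d y z)"

definition Adh_d :: "nat \<Rightarrow> 'a list set \<Rightarrow> 'a list set set" where
  "Adh_d d L = {I. ideal_d d I \<and> I \<subseteq> down_d d (L \<inter> I)}"

definition star_word :: "'a list \<Rightarrow> 'a list set" where
  "star_word v = {concat (replicate n v) | n. True}"

text \<open>kappa d w i: letters of w at positions p \<equiv> i (mod d), positions counted from 1.\<close>
definition kappa_d :: "nat \<Rightarrow> 'a list \<Rightarrow> nat \<Rightarrow> 'a set" where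
  "kappa_d d w i = {w ! (p - 1) | p. 1 \<le> p \<and> p \<le> length w \<and> p mod d = i mod d}"

definition pi_d :: "nat \<Rightarrow> 'a list \<Rightarrow> nat" where
  "pi_d d w = (LEAST t. 1 \<le> t \<and> t \<le> d \<and> t dvd d \<and>
      (\<forall>i \<in> {1..d - t}. kappa_d d w (i + t) = kappa_d d w i))"

end

theory Submission
  imports Defs "HOL-Number_Theory.Cong"
begin

text \<open>For d dividing |w| the ideal generated by the powers of w consists of the words of length
  divisible by d whose letters at positions congruent to r (mod d) occur in w at positions congruent
  to r; so the ideal is determined by the residue profile of w, and it adheres to the language of a
  cyclic automaton iff some accepted word has the same profile. Take accepted words x1, x2 with the
  profile of v. A pigeonhole argument on pairs of states finds i < j \<le> m^2 at which both runs
  repeat a state. Pumping the loop of length e = j - i and concatenating pumped words placed at all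
  offsets c e produces accepted words whose profile is the closure of that of v under shifting by e.
  This profile is e-periodic, and e divides (m^2)!, hence d; so \<pi>_d(w) \<le> e \<le> m^2.\<close>

section \<open>Embeddings deleting blocks of length divisible by d\<close>

inductive emb_d :: "nat \<Rightarrow> 'a list \<Rightarrow> 'a list \<Rightarrow> bool" for d where
  Nil: "emb_d d [] []"
| Cons: "emb_d d u v \<Longrightarrow> emb_d d (a # u) (a # v)"
| skip: "d dvd length y \<Longrightarrow> emb_d d u v \<Longrightarrow> emb_d d u (y @ v)"

lemma emb_d_refl: "emb_d d u u"
  by (induction u) (auto intro: emb_d.intros)

lemma emb_d_append: "emb_d d u v \<Longrightarrow> emb_d d u' v' \<Longrightarrow> emb_d d (u @ u') (v @ v')"
  by (induction rule: emb_d.induct) (auto intro: emb_d.intros)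

lemma emb_d_Nil: "d dvd length y \<Longrightarrow> emb_d d [] y"
  using emb_d.skip[OF _ emb_d.Nil] by fastforce

lemma emb_d_length_le: "emb_d d u v \<Longrightarrow> length u \<le> length v"
  by (induction rule: emb_d.induct) auto

lemma emb_d_length_mod: "emb_d d u v \<Longrightarrow> length u mod d = length v mod d"
  by (induction rule: emb_d.induct) (auto simp: mod_Suc_eq elim!: dvdE, metis mod_Suc_eq)

lemma subword_d_altdef:
  "subword_d d u v \<longleftrightarrow> (\<exists>u0 us vs. length us = length vs \<and> u = u0 @ concat us \<and>
    v = u0 @ concat (map (\<lambda>(vi, ui). vi @ ui) (zip vs us)) \<and> (\<forall>x \<in> set vs. d dvd length x))"
proof
  assume "subword_d d u v"
  then obtain us vs where h: "length us = length vs + 1" "u = concat us"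
    "v = hd us @ concat (map (\<lambda>(vi, ui). vi @ ui) (zip vs (tl us)))" "\<forall>x \<in> set vs. d dvd length x"
    unfolding subword_d_def by blast
  then obtain u0 us' where "us = u0 # us'" by (cases us) auto
  with h show "\<exists>u0 us vs. length us = length vs \<and> u = u0 @ concat us \<and>
    v = u0 @ concat (map (\<lambda>(vi, ui). vi @ ui) (zip vs us)) \<and> (\<forall>x \<in> set vs. d dvd length x)"
    by auto
next
  assume "\<exists>u0 us vs. length us = length vs \<and> u = u0 @ concat us \<and>
    v = u0 @ concat (map (\<lambda>(vi, ui). vi @ ui) (zip vs us)) \<and> (\<forall>x \<in> set vs. d dvd length x)"
  then obtain u0 us vs where "length us = length vs" "u = u0 @ concat us"
    "v = u0 @ concat (map (\<lambda>(vi, ui). vi @ ui) (zip vs us))" "\<forall>x \<in> set vs. d dvd length x"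
    by blast
  then show "subword_d d u v"
    unfolding subword_d_def by (intro exI[of _ "u0 # us"] exI[of _ vs]) simp
qed

lemma subword_d_iff_emb_d: "subword_d d u v \<longleftrightarrow> emb_d d u v"
proof
  assume "subword_d d u v"
  then obtain u0 us vs where h: "length us = length vs" "u = u0 @ concat us"
    "v = u0 @ concat (map (\<lambda>(vi, ui). vi @ ui) (zip vs us))" "\<forall>x \<in> set vs. d dvd length x"
    unfolding subword_d_altdef by blast
  from h(1,4) have "emb_d d (concat us) (concat (map (\<lambda>(vi, ui). vi @ ui) (zip vs us)))"
  proof (induction us vs rule: list_induct2)
    case (Cons ui us vi vs)
    then have "emb_d d (ui @ concat us) (ui @ concat (map (\<lambda>(vi, ui). vi @ ui) (zip vs us)))"
      by (simp add: emb_d_append emb_d_refl)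
    with Cons.prems show ?case by (simp add: emb_d.skip)
  qed (simp add: emb_d.Nil)
  with h show "emb_d d u v"
    by (simp add: emb_d_append emb_d_refl)
next
  assume "emb_d d u v"
  then show "subword_d d u v"
    unfolding subword_d_altdef
  proof (induction rule: emb_d.induct)
    case Nil
    show ?case by (intro exI[of _ "[]"]) simp
  next
    case (Cons u v a)
    then obtain u0 us vs where "length us = length vs" "u = u0 @ concat us"
      "v = u0 @ concat (map (\<lambda>(vi, ui). vi @ ui) (zip vs us))" "\<forall>x \<in> set vs. d dvd length x"
      by blast
    then show ?case by (intro exI[of _ "a # u0"] exI[of _ us] exI[of _ vs]) simp
  next
    case (skip y u v)
    then obtain u0 us vs where "length us = length vs" "u = u0 @ concat us"
      "v = u0 @ concat (map (\<lambda>(vi, ui). vi @ ui) (zip vs us))" "\<forall>x \<in> set vs. d dvd length x"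
      by blast
    with skip.hyps show ?case by (intro exI[of _ "[]"] exI[of _ "u0 # us"] exI[of _ "y # vs"]) simp
  qed
qed

section \<open>Residue profiles\<close>

definition residue_letters :: "nat \<Rightarrow> nat \<Rightarrow> 'a list \<Rightarrow> nat \<Rightarrow> 'a set" where
  "residue_letters d s w r = {w ! p | p. p < length w \<and> (s + p) mod d = r mod d}"

lemma residue_letters_Nil [simp]: "residue_letters d s [] r = {}"
  by (simp add: residue_letters_def)

lemma mem_residue_letters_iff:
  "a \<in> residue_letters d s w r \<longleftrightarrow> (\<exists>p < length w. w ! p = a \<and> (s + p) mod d = r mod d)"
  by (auto simp: residue_letters_def)

lemma residue_letters_append:
  "residue_letters d s (u @ v) r = residue_letters d s u r \<union> residue_letters d (s + length u) v r"
proof -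
  have split: "(\<exists>p < length u + length v. P p) \<longleftrightarrow> (\<exists>p < length u. P p) \<or> (\<exists>p < length v. P (length u + p))"
    for P
  proof
    assume "\<exists>p < length u + length v. P p"
    then obtain p where "p < length u + length v" "P p" by blast
    then show "(\<exists>p < length u. P p) \<or> (\<exists>p < length v. P (length u + p))"
      by (cases "p < length u") (blast, auto intro!: exI[of _ "p - length u"])
  qed (auto intro: trans_less_add1 exI[of _ "length u + p" for p])
  show ?thesis
    by (rule set_eqI) (simp add: mem_residue_letters_iff split nth_append add.assoc cong: conj_cong)
qed

lemma residue_letters_singleton:
  "residue_letters d s [a] r = (if s mod d = r mod d then {a} else {})"
  by (auto simp: residue_letters_def)

lemma residue_letters_Cons:
  "residue_letters d s (a # u) r = (if s mod d = r mod d then {a} else {}) \<union> residue_letters d (Suc s) u r"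
  using residue_letters_append[of d s "[a]" u r] by (simp add: residue_letters_singleton)

lemma residue_letters_cong:
  assumes "s mod d = s' mod d"
  shows "residue_letters d s u = residue_letters d s' u"
proof
  fix r
  have "(s + p) mod d = (s' + p) mod d" for p
    using assms by (metis mod_add_left_eq)
  then show "residue_letters d s u r = residue_letters d s' u r"
    unfolding residue_letters_def by simp
qed

lemma residue_letters_shift: "residue_letters d (s + k) u (r + k) = residue_letters d s u r"
proof -
  have "(s + k + p) mod d = (r + k) mod d \<longleftrightarrow> (s + p) mod d = r mod d" for p
    using cong_add_rcancel_nat[of "s + p" k "r" d] by (simp add: cong_def add_ac)
  then show ?thesis unfolding residue_letters_def by simp
qed

lemma residue_letters_replicate:
  "residue_letters d s (concat (replicate n b)) r = (\<Union>l<n. residue_letters d (s + l * length b) b r)"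
proof (induction n arbitrary: s)
  case 0
  then show ?case by simp
next
  case (Suc n)
  have "(\<Union>l<Suc n. residue_letters d (s + l * length b) b r)
    = residue_letters d s b r \<union> (\<Union>l<n. residue_letters d (s + length b + l * length b) b r)"
    by (simp add: lessThan_Suc_eq_insert_0 add_ac)
  then show ?case by (simp add: residue_letters_append Suc.IH)
qed

lemma residue_letters_concat:
  "\<forall>q \<in> set qs. d dvd length q \<Longrightarrow>
    residue_letters d s (concat qs) r = (\<Union>q \<in> set qs. residue_letters d s q r)"
proof (induction qs)
  case Nil
  then show ?case by simp
next
  case (Cons q qs)
  then have "residue_letters d (s + length q) (concat qs) = residue_letters d s (concat qs)"
    by (intro residue_letters_cong) (auto elim!: dvdE)
  with Cons show ?case by (simp add: residue_letters_append)
qed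

lemma residue_letters_offset_eq:
  assumes "0 < d" "residue_letters d 0 x = residue_letters d 0 y"
  shows "residue_letters d s x = residue_letters d s y"
proof -
  define k where "k = d - s mod d"
  have "s + k = (s - s mod d) + d"
    using mod_less_divisor[OF assms(1), of s] mod_less_eq_dividend[of s d] by (simp add: k_def)
  also have "\<dots> = d * (s div d + 1)"
    by (simp add: minus_mod_eq_mult_div)
  finally have "(s + k) mod d = 0 mod d" by simp
  then have "residue_letters d s z r = residue_letters d 0 z (r + k)" for z :: "'a list" and r
    by (metis residue_letters_shift residue_letters_cong)
  with assms(2) show ?thesis by auto
qed

lemma kappa_d_eq_residue_letters: "kappa_d d w = residue_letters d 1 w"
proof (intro ext set_eqI iffI)
  fix i a
  assume "a \<in> kappa_d d w i"
  then obtain p where "1 \<le> p" "p \<le> length w" "p mod d = i mod d" "a = w ! (p - 1)"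
    unfolding kappa_d_def by blast
  then show "a \<in> residue_letters d 1 w i"
    unfolding residue_letters_def by (intro CollectI exI[of _ "p - 1"]) auto
next
  fix i a
  assume "a \<in> residue_letters d 1 w i"
  then obtain p where "p < length w" "(1 + p) mod d = i mod d" "a = w ! p"
    unfolding residue_letters_def by blast
  then show "a \<in> kappa_d d w i"
    unfolding kappa_d_def by (intro CollectI exI[of _ "Suc p"]) auto
qed

lemma pi_d_le_period:
  assumes "0 < d" "0 < e" "e dvd d"
    and period: "\<And>r. residue_letters d 0 w (r + e) = residue_letters d 0 w r"
  shows "pi_d d w \<le> e"
proof -
  have kappa: "kappa_d d w i = residue_letters d 0 w (i - 1)" if "1 \<le> i" for i
    using that residue_letters_shift[of d 0 1 w "i - 1"] by (simp add: kappa_d_eq_residue_letters)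
  have "kappa_d d w (i + e) = kappa_d d w i" if "1 \<le> i" for i
    using that kappa[of i] kappa[of "i + e"] period[of "i - 1"] by simp
  moreover have "e \<le> d"
    using assms(1,3) by (simp add: dvd_imp_le)
  ultimately show ?thesis
    unfolding pi_d_def using assms(2,3) by (intro Least_le) auto
qed

lemma emb_d_residue_letters: "emb_d d u v \<Longrightarrow> residue_letters d s u \<le> residue_letters d s v"
proof (induction arbitrary: s rule: emb_d.induct)
  case Nil
  then show ?case by simp
next
  case (Cons u v a)
  then show ?case by (auto simp: residue_letters_Cons le_fun_def)
next
  case (skip y u v)
  then have "residue_letters d (s + length y) v = residue_letters d s v"
    by (intro residue_letters_cong) (auto elim!: dvdE)
  with skip show ?case by (auto simp: residue_letters_append le_fun_def)
qed

section \<open>Ideals generated by powers of a word\<close>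

lemma emb_d_into_power:
  assumes "d dvd length w" "(s + length u) mod d = 0"
    and "residue_letters d s u \<le> residue_letters d 0 w"
  shows "\<exists>t n. t \<le> length w \<and> t mod d = s mod d \<and> emb_d d u (drop t w @ concat (replicate n w))"
  using assms(2,3)
proof (induction u arbitrary: s)
  case Nil
  then show ?case
    using assms(1) by (intro exI[of _ "length w"] exI[of _ 0]) (auto intro: emb_d.Nil)
next
  case (Cons a u)
  have "residue_letters d (Suc s) u \<le> residue_letters d 0 w"
    using Cons.prems(2) by (simp add: le_fun_def residue_letters_Cons)
  moreover have "(Suc s + length u) mod d = 0"
    using Cons.prems(1) by simp
  ultimately obtain t n where t: "t \<le> length w" "t mod d = Suc s mod d"
    and emb: "emb_d d u (drop t w @ concat (replicate n w))"
    using Cons.IH[of "Suc s"] by auto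
  have "residue_letters d s (a # u) s \<subseteq> residue_letters d 0 w s"
    using Cons.prems(2) by (simp add: le_fun_def)
  then have "a \<in> residue_letters d 0 w s"
    by (simp add: residue_letters_Cons)
  then obtain q where q: "q < length w" "q mod d = s mod d" "a = w ! q"
    unfolding residue_letters_def by auto
  define gap where "gap = drop (Suc q) w @ take t w"
  have "[length gap + Suc q = 0 + Suc q] (mod d)"
  proof -
    have "length gap + Suc q = length w + t" using q t by (simp add: gap_def)
    also have "[\<dots> = t] (mod d)" using assms(1) by (auto simp: cong_def elim!: dvdE)
    also have "[t = Suc q] (mod d)" using q t by (simp add: cong_def) (metis mod_Suc_eq)
    finally show ?thesis by simp
  qed
  then have "d dvd length gap" by (simp only: cong_add_rcancel_nat cong_0_iff)
  then have "emb_d d (a # u) (a # gap @ drop t w @ concat (replicate n w))"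
    by (intro emb_d.Cons emb_d.skip emb)
  also have "a # gap @ drop t w @ concat (replicate n w) = drop q w @ concat (replicate (Suc n) w)"
    using q t by (simp add: gap_def Cons_nth_drop_Suc)
  finally show ?case
    using q by (intro exI[of _ q] exI[of _ "Suc n"]) simp
qed

lemma down_d_star_word_iff:
  assumes "d dvd length w"
  shows "u \<in> down_d d (star_word w) \<longleftrightarrow>
    d dvd length u \<and> residue_letters d 0 u \<le> residue_letters d 0 w"
proof
  assume "u \<in> down_d d (star_word w)"
  then obtain n where emb: "emb_d d u (concat (replicate n w))"
    unfolding down_d_def star_word_def subword_d_iff_emb_d by blast
  have "d dvd length (concat (replicate n w))"
    using assms by (simp add: length_concat sum_list_replicate)
  then have "d dvd length u"
    using emb_d_length_mod[OF emb] by (simp add: dvd_eq_mod_eq_0)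
  moreover have "residue_letters d 0 (concat (replicate n w)) \<le> residue_letters d 0 w"
    using assms by (auto simp: residue_letters_concat le_fun_def)
  ultimately show "d dvd length u \<and> residue_letters d 0 u \<le> residue_letters d 0 w"
    using emb_d_residue_letters[OF emb, of 0] by auto
next
  assume "d dvd length u \<and> residue_letters d 0 u \<le> residue_letters d 0 w"
  then obtain t n where t: "t \<le> length w" "t mod d = 0"
    and "emb_d d u (drop t w @ concat (replicate n w))"
    using emb_d_into_power[OF assms, of 0 u] by auto
  then have "emb_d d u (take t w @ drop t w @ concat (replicate n w))"
    by (intro emb_d.skip[where y = "take t w"]) (auto simp: min_def mod_eq_0_iff_dvd)
  then have "emb_d d u ((take t w @ drop t w) @ concat (replicate n w))"
    by (simp only: append_assoc)
  then have "emb_d d u (concat (replicate (Suc n) w))"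
    by simp
  then show "u \<in> down_d d (star_word w)"
    unfolding down_d_def star_word_def subword_d_iff_emb_d by blast
qed

lemma self_in_down_d_star_word: "u \<in> down_d d (star_word u)"
  unfolding down_d_def star_word_def subword_d_iff_emb_d
  using emb_d_refl[of d u] by (auto intro!: exI[of _ "concat (replicate 1 u)"])

lemma ideal_d_down_star_word:
  assumes "d dvd length w"
  shows "ideal_d d (down_d d (star_word w))"
  unfolding ideal_d_def
proof (intro conjI allI impI ballI)
  show "down_d d (star_word w) \<noteq> {}"
    using assms by (auto simp: down_d_star_word_iff le_fun_def)
next
  fix u v assume "v \<in> down_d d (star_word w)" "subword_d d u v"
  then show "u \<in> down_d d (star_word w)"
    using assms emb_d_length_mod[of d u v] emb_d_residue_letters[of d u v 0]
    by (auto simp: down_d_star_word_iff subword_d_iff_emb_d dvd_eq_mod_eq_0 intro: order_trans)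
next
  fix x y assume x: "x \<in> down_d d (star_word w)" and y: "y \<in> down_d d (star_word w)"
  then have dx: "d dvd length x" and dy: "d dvd length y"
    using assms by (auto simp: down_d_star_word_iff)
  then have "residue_letters d (0 + length x) y = residue_letters d 0 y"
    by (intro residue_letters_cong) (auto elim!: dvdE)
  then have "x @ y \<in> down_d d (star_word w)"
    using assms x y by (auto simp: down_d_star_word_iff residue_letters_append le_fun_def)
  moreover have "emb_d d x (x @ y)"
    using emb_d_append[OF emb_d_refl emb_d_Nil[OF dy], of x] by simp
  moreover have "emb_d d y (x @ y)"
    using dx by (intro emb_d.skip emb_d_refl)
  ultimately show "\<exists>z \<in> down_d d (star_word w). subword_d d x z \<and> subword_d d y z"
    unfolding subword_d_iff_emb_d by blast
qed

lemma down_d_star_word_mono: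
  assumes "d dvd length v" "d dvd length w" "residue_letters d 0 v \<le> residue_letters d 0 w"
  shows "down_d d (star_word v) \<subseteq> down_d d (star_word w)"
  using assms by (auto simp: down_d_star_word_iff intro: order_trans)

lemma down_d_star_word_in_Adh_d:
  assumes "d dvd length w" "d dvd length x" "residue_letters d 0 x = residue_letters d 0 w"
    and "\<And>n. concat (replicate n x) \<in> L"
  shows "down_d d (star_word w) \<in> Adh_d d L"
  unfolding Adh_d_def
proof (intro CollectI conjI subsetI)
  show "ideal_d d (down_d d (star_word w))"
    using assms(1) by (rule ideal_d_down_star_word)
next
  have eq: "down_d d (star_word x) = down_d d (star_word w)"
    using assms(1-3) by (intro set_eqI) (simp add: down_d_star_word_iff)
  fix u assume "u \<in> down_d d (star_word w)"
  then have "u \<in> down_d d (star_word x)"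
    using eq by simp
  then obtain n where "subword_d d u (concat (replicate n x))"
    unfolding down_d_def star_word_def by blast
  moreover have "concat (replicate n x) \<in> down_d d (star_word w)"
    using assms(1-3)
    by (auto simp: down_d_star_word_iff residue_letters_concat le_fun_def length_concat sum_list_replicate)
  ultimately show "u \<in> down_d d (L \<inter> down_d d (star_word w))"
    unfolding down_d_def using assms(4) by blast
qed

lemma Adh_d_down_star_word_witness:
  assumes "d dvd length v" "down_d d (star_word v) \<in> Adh_d d L"
  obtains x where "x \<in> L" "d dvd length x" "length v \<le> length x"
    "residue_letters d 0 x = residue_letters d 0 v"
proof -
  have "v \<in> down_d d (L \<inter> down_d d (star_word v))"
    using assms(2) self_in_down_d_star_word[of v] unfolding Adh_d_def by blast
  then obtain x where x: "x \<in> L" "x \<in> down_d d (star_word v)" and "emb_d d v x"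
    unfolding down_d_def subword_d_iff_emb_d by blast
  then have "length v \<le> length x" "residue_letters d 0 v \<le> residue_letters d 0 x"
    using emb_d_length_le emb_d_residue_letters by blast+
  with x assms(1) show ?thesis
    by (intro that[of x]) (auto simp: down_d_star_word_iff intro: order_antisym)
qed

section \<open>Pumping\<close>

definition shifted_residue_letters :: "nat \<Rightarrow> nat \<Rightarrow> 'a list \<Rightarrow> nat \<Rightarrow> 'a set" where
  "shifted_residue_letters d e x r = (\<Union>c. residue_letters d (c * e) x r)"

lemma residue_letters_le_shifted: "residue_letters d 0 x \<le> shifted_residue_letters d e x"
proof (rule le_funI)
  fix r
  show "residue_letters d 0 x r \<le> shifted_residue_letters d e x r"
    unfolding shifted_residue_letters_def
    using UN_upper[of 0 UNIV "\<lambda>c. residue_letters d (c * e) x r"] by simp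
qed

lemma shifted_residue_letters_period:
  assumes "0 < d"
  shows "shifted_residue_letters d e x (r + e) = shifted_residue_letters d e x r"
proof -
  have "residue_letters d (c * e) x (r + e) \<subseteq> shifted_residue_letters d e x r" for c
  proof (cases c)
    case 0
    have "residue_letters d 0 x = residue_letters d (d * e) x"
      by (intro residue_letters_cong) simp
    also have "\<dots> = residue_letters d ((d - 1) * e + e) x"
      using assms by (simp add: algebra_simps)
    finally show ?thesis
      using 0 by (auto simp: residue_letters_shift shifted_residue_letters_def)
  next
    case (Suc c')
    then show ?thesis
      using residue_letters_shift[of d "c' * e" e x r]
      by (auto simp: shifted_residue_letters_def add.commute)
  qed
  moreover have "residue_letters d (c * e) x r \<subseteq> shifted_residue_letters d e x (r + e)" for c
  proof -
    have "residue_letters d (c * e) x r = residue_letters d (Suc c * e) x (r + e)"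
      using residue_letters_shift[of d "c * e" e x r] by (simp add: add.commute)
    then show ?thesis
      unfolding shifted_residue_letters_def by blast
  qed
  ultimately show ?thesis
    by (intro equalityI)
      (simp add: shifted_residue_letters_def[of d e x "r + e"] UN_subset_iff,
       simp add: shifted_residue_letters_def[of d e x r] UN_subset_iff)
qed

lemma shifted_residue_letters_eq:
  assumes "0 < d" "residue_letters d 0 x = residue_letters d 0 y"
  shows "shifted_residue_letters d e x = shifted_residue_letters d e y"
proof -
  have "residue_letters d (c * e) x = residue_letters d (c * e) y" for c
    using assms by (rule residue_letters_offset_eq)
  then show ?thesis
    unfolding shifted_residue_letters_def by simp
qed

definition pump :: "'a list \<Rightarrow> 'a list \<Rightarrow> 'a list \<Rightarrow> nat \<Rightarrow> 'a list" where
  "pump y b z n = y @ concat (replicate n b) @ z"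

lemma pump_Suc_0: "pump y b z (Suc 0) = y @ b @ z"
  by (simp add: pump_def)

lemma length_pump_Suc: "length (pump y b z (Suc n)) = length (y @ b @ z) + n * length b"
  by (simp add: pump_def length_concat sum_list_replicate)

lemma residue_letters_pump_subset:
  assumes "s mod d = (c * length b) mod d"
  shows "residue_letters d s (pump y b z (Suc k)) r \<subseteq> shifted_residue_letters d (length b) (y @ b @ z) r"
proof -
  define e where "e = length b"
  have offset: "residue_letters d (s + n) u = residue_letters d (c * e + n) u" for n u
    using assms by (intro residue_letters_cong) (metis e_def mod_add_left_eq)
  have pieces: "residue_letters d t y r \<union> residue_letters d (t + length y) b r
      \<union> residue_letters d (t + length y + e) z r \<subseteq> shifted_residue_letters d e (y @ b @ z) r"
    if "t = c' * e" for t c'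
    using that by (auto simp: shifted_residue_letters_def residue_letters_append e_def)
  have "residue_letters d s y r \<subseteq> shifted_residue_letters d e (y @ b @ z) r"
    using fun_cong[OF offset[of 0 y], of r] pieces[of "c * e" c] by simp
  moreover have "residue_letters d (s + length y + l * e) b r \<subseteq> shifted_residue_letters d e (y @ b @ z) r"
    for l
    using fun_cong[OF offset[of "length y + l * e" b], of r] pieces[of "(c + l) * e" "c + l"]
    by (simp add: algebra_simps)
  moreover have "residue_letters d (s + length y + Suc k * e) z r \<subseteq> shifted_residue_letters d e (y @ b @ z) r"
    using fun_cong[OF offset[of "length y + Suc k * e" z], of r] pieces[of "(c + k) * e" "c + k"]
    by (simp add: algebra_simps)
  moreover have "residue_letters d s (pump y b z (Suc k)) r
    = residue_letters d s y r \<union> (\<Union>l<Suc k. residue_letters d (s + length y + l * e) b r)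
      \<union> residue_letters d (s + length y + Suc k * e) z r"
    unfolding pump_def
    by (simp only: residue_letters_append residue_letters_replicate length_append length_concat
        map_replicate sum_list_replicate length_replicate e_def add.assoc of_nat_id Un_assoc)
  ultimately show ?thesis
    unfolding e_def by blast
qed

text \<open>The middle copy of \<open>y @ b @ z\<close> in \<open>pump_block d y b z c\<close> starts at an offset congruent
  to \<open>c * length b\<close>; the last factor makes the total length divisible by d.\<close>
definition pump_block :: "nat \<Rightarrow> 'a list \<Rightarrow> 'a list \<Rightarrow> 'a list \<Rightarrow> nat \<Rightarrow> 'a list" where
  "pump_block d y b z c = pump y b z (Suc c) @ pump y b z 1 @ pump y b z (Suc (d - c))"

lemma dvd_length_pump_block:
  assumes "d dvd length (y @ b @ z)" "c \<le> d"
  shows "d dvd length (pump_block d y b z c)"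
proof -
  define x e where "x = y @ b @ z" and "e = length b"
  have "c * e + (d - c) * e = d * e"
    using assms(2) by (simp add: add_mult_distrib[symmetric])
  then have "length (pump_block d y b z c) = 3 * length x + d * e"
    unfolding pump_block_def length_append length_pump_Suc x_def e_def One_nat_def by simp
  moreover have "d dvd length x"
    using assms(1) by (simp add: x_def)
  ultimately show ?thesis
    by simp
qed

lemma residue_letters_pump_block_subset:
  assumes "d dvd length (y @ b @ z)"
  shows "residue_letters d 0 (pump_block d y b z c) r \<subseteq> shifted_residue_letters d (length b) (y @ b @ z) r"
proof -
  define x e where "x = y @ b @ z" and "e = length b"
  have mod_x: "(length x + n) mod d = n mod d" for n
    using assms by (auto simp: x_def elim!: dvdE)
  have "(length x + c * e + length x) mod d = (length x + (length x + c * e)) mod d"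
    by (simp add: ac_simps)
  also have "\<dots> = (c * e) mod d"
    by (simp only: mod_x)
  finally have "residue_letters d (length x + c * e + length x) (pump y b z (Suc (d - c))) r
      \<subseteq> shifted_residue_letters d e x r"
    unfolding x_def e_def by (rule residue_letters_pump_subset)
  moreover have "residue_letters d (length x + c * e) (pump y b z (Suc 0)) r \<subseteq> shifted_residue_letters d e x r"
    using mod_x[of "c * e"] unfolding x_def e_def by (rule residue_letters_pump_subset)
  moreover have "residue_letters d 0 (pump y b z (Suc c)) r \<subseteq> shifted_residue_letters d e x r"
    unfolding x_def e_def by (rule residue_letters_pump_subset[of _ _ 0]) simp
  ultimately show ?thesis
    by (simp add: pump_block_def residue_letters_append length_pump_Suc x_def e_def)
qed

lemma residue_letters_subset_pump_block:
  assumes "d dvd length (y @ b @ z)"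
  shows "residue_letters d (c * length b) (y @ b @ z) r \<subseteq> residue_letters d 0 (pump_block d y b z (c mod d)) r"
proof -
  define x e where "x = y @ b @ z" and "e = length b"
  have "length (pump y b z (Suc (c mod d))) mod d = (length x + c mod d * e) mod d"
    by (simp add: length_pump_Suc x_def e_def)
  also have "\<dots> = (c * e) mod d"
    using assms by (auto simp: x_def mod_mult_left_eq elim!: dvdE)
  finally have "residue_letters d (c * e) x = residue_letters d (length (pump y b z (Suc (c mod d)))) x"
    by (rule residue_letters_cong[symmetric])
  then show ?thesis
    by (simp add: pump_block_def residue_letters_append pump_Suc_0 x_def e_def) blast
qed

lemma pumping_in_submonoid:
  assumes "0 < d" "d dvd length (y @ b @ z)"
    and pumped: "\<And>n. pump y b z n \<in> L"
    and concat_closed: "\<And>us. set us \<subseteq> L \<Longrightarrow> concat us \<in> L"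
  obtains x' where "x' \<in> L" "d dvd length x'"
    "residue_letters d 0 x' = shifted_residue_letters d (length b) (y @ b @ z)"
proof -
  define x' where "x' = concat (map (pump_block d y b z) [0..<d])"
  have "concat (map (pump_block d y b z) cs)
    = concat (concat (map (\<lambda>c. [pump y b z (Suc c), pump y b z 1, pump y b z (Suc (d - c))]) cs))" for cs
    by (induction cs) (simp_all add: pump_block_def)
  then have "x' \<in> L"
    unfolding x'_def using pumped by (auto intro!: concat_closed)
  have dvd_blocks: "\<forall>q \<in> set (map (pump_block d y b z) [0..<d]). d dvd length q"
    using assms(2) by (auto intro: dvd_length_pump_block)
  have "d dvd length (concat qs)" if "\<forall>q \<in> set qs. d dvd length q" for qs :: "'a list list"
    using that by (induction qs) auto
  with dvd_blocks have "d dvd length x'"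
    unfolding x'_def by blast
  have "residue_letters d 0 x' r = shifted_residue_letters d (length b) (y @ b @ z) r" for r
  proof
    show "residue_letters d 0 x' r \<subseteq> shifted_residue_letters d (length b) (y @ b @ z) r"
      unfolding x'_def residue_letters_concat[OF dvd_blocks]
      using residue_letters_pump_block_subset[OF assms(2)] by auto
    have "c mod d \<in> set [0..<d]" for c
      using assms(1) by simp
    then show "shifted_residue_letters d (length b) (y @ b @ z) r \<subseteq> residue_letters d 0 x' r"
      unfolding x'_def residue_letters_concat[OF dvd_blocks] shifted_residue_letters_def
      using residue_letters_subset_pump_block[OF assms(2)] by fastforce
  qed
  with \<open>x' \<in> L\<close> \<open>d dvd length x'\<close> show ?thesis
    by (intro that) auto
qed

section \<open>Runs of automata\<close>

definition is_path :: "('q, 'a) nfa \<Rightarrow> (nat \<Rightarrow> 'q) \<Rightarrow> 'a list \<Rightarrow> bool" where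
  "is_path A f w \<longleftrightarrow> (\<forall>k < length w. (f k, w ! k, f (Suc k)) \<in> trans A)"

lemma run_append: "run A p (u @ v) q \<longleftrightarrow> (\<exists>r. run A p u r \<and> run A r v q)"
  by (induction u arbitrary: p) auto

lemma run_concat: "\<forall>u \<in> set us. run A p u p \<Longrightarrow> run A p (concat us) p"
  by (induction us) (auto simp: run_append)

lemma run_imp_path: "run A p w q \<Longrightarrow> \<exists>f. is_path A f w \<and> f 0 = p \<and> f (length w) = q"
proof (induction w arbitrary: p)
  case Nil
  then show ?case by (auto simp: is_path_def)
next
  case (Cons a w)
  then obtain p' where "(p, a, p') \<in> trans A" "run A p' w q"
    by auto
  moreover obtain f where "is_path A f w" "f 0 = p'" "f (length w) = q"
    using Cons.IH[OF \<open>run A p' w q\<close>] by blast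
  ultimately show ?case
    by (intro exI[of _ "case_nat p f"]) (auto simp: is_path_def nth_Cons split: nat.split)
qed

lemma path_imp_run: "is_path A f w \<Longrightarrow> run A (f 0) w (f (length w))"
proof (induction w arbitrary: f)
  case (Cons a w)
  then have "is_path A (f \<circ> Suc) w"
    by (auto simp: is_path_def)
  with Cons show ?case
    by (fastforce simp: is_path_def)
qed simp

lemma is_path_segment:
  "is_path A f w \<Longrightarrow> i \<le> j \<Longrightarrow> j \<le> length w \<Longrightarrow>
    is_path A (\<lambda>k. f (i + k)) (take (j - i) (drop i w))"
  by (auto simp: is_path_def)

lemma is_path_in_states:
  assumes "wf_nfa A" "is_path A f w" "f 0 \<in> states A" "k \<le> length w"
  shows "f k \<in> states A"
proof (cases k)
  case (Suc k')
  then have "(f k', w ! k', f k) \<in> trans A"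
    using assms(2,4) by (auto simp: is_path_def)
  then show ?thesis
    using assms(1) by (auto simp: wf_nfa_def)
qed (use assms in simp)

lemma run_pumping:
  assumes "is_path A f x" "i \<le> j" "j \<le> length x" "f i = f j"
  shows "run A (f 0) (take i x @ concat (replicate n (take (j - i) (drop i x))) @ drop j x) (f (length x))"
proof -
  have "run A (f 0) (take i x) (f i)"
    using path_imp_run[OF is_path_segment[OF assms(1), of 0 i]] assms by simp
  moreover have "run A (f i) (take (j - i) (drop i x)) (f i)"
    using path_imp_run[OF is_path_segment[OF assms(1,2,3)]] assms by simp
  then have "run A (f i) (concat (replicate n (take (j - i) (drop i x)))) (f i)"
    by (intro run_concat) simp
  moreover have "run A (f j) (drop j x) (f (length x))"
    using path_imp_run[OF is_path_segment[OF assms(1), of j "length x"]] assms by simp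
  ultimately show ?thesis
    using assms(4) by (auto simp: run_append)
qed

lemma cyclic_init_final:
  assumes "cyclic A"
  obtains q0 where "init A = {q0}" "final A = {q0}"
  using assms unfolding cyclic_def by (metis card_1_singletonE)

lemma cyclic_concat_in_lang:
  assumes "cyclic A" "set us \<subseteq> lang A"
  shows "concat us \<in> lang A"
proof -
  obtain q0 where q0: "init A = {q0}" "final A = {q0}"
    using assms(1) by (rule cyclic_init_final)
  then have "run A q0 (concat us) q0"
    using assms(2) by (intro run_concat) (auto simp: lang_def)
  with q0 show ?thesis
    by (simp add: lang_def)
qed

lemma card_states_ge_1: "wf_nfa A \<Longrightarrow> cyclic A \<Longrightarrow> 1 \<le> card (states A)"
  unfolding wf_nfa_def cyclic_def by (metis card_mono)

lemma cyclic_lang_pumping: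
  assumes "cyclic A" "is_path A f x" "f 0 \<in> init A" "f (length x) \<in> final A"
    and "i \<le> j" "j \<le> length x" "f i = f j" "0 < d" "d dvd length x"
  obtains x' where "x' \<in> lang A" "d dvd length x'"
    "residue_letters d 0 x' = shifted_residue_letters d (j - i) x"
proof -
  define y b z where "y = take i x" and "b = take (j - i) (drop i x)" and "z = drop j x"
  have "b @ z = drop i x"
    using append_take_drop_id[of "j - i" "drop i x"] assms(5) by (simp add: b_def z_def)
  then have x: "y @ b @ z = x"
    by (simp add: y_def)
  have len_b: "length b = j - i"
    using assms(5,6) by (simp add: b_def)
  obtain q0 where q0: "init A = {q0}" "final A = {q0}"
    using assms(1) by (rule cyclic_init_final)
  with assms(3,4) have "f 0 = q0" "f (length x) = q0"
    by auto
  with q0 have pumped: "pump y b z n \<in> lang A" for n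
    using run_pumping[OF assms(2,5,6,7), of n] by (simp add: lang_def pump_def y_def b_def z_def)
  have closed: "concat us \<in> lang A" if "set us \<subseteq> lang A" for us
    using assms(1) that by (rule cyclic_concat_in_lang)
  have "d dvd length (y @ b @ z)"
    using assms(9) x by simp
  then obtain x' where "x' \<in> lang A" "d dvd length x'"
    "residue_letters d 0 x' = shifted_residue_letters d (length b) (y @ b @ z)"
    using pumping_in_submonoid[OF assms(8) _ pumped closed] by blast
  then show ?thesis
    using that x len_b by simp
qed

lemma pigeonhole_nat_prefix:
  assumes "finite S" "card S \<le> N" "\<forall>k \<le> N. g k \<in> S"
  obtains i j where "i < j" "j \<le> N" "g i = g j"
proof -
  have "g ` {0..N} \<subseteq> S"
    using assms(3) by auto
  then have "card (g ` {0..N}) \<le> card S"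
    by (rule card_mono[OF assms(1)])
  then have "card (g ` {0..N}) < card {0..N}"
    using assms(2) by simp
  then have "\<not> inj_on g {0..N}"
    by (rule pigeonhole)
  then obtain i j where "i \<le> N" "j \<le> N" "i \<noteq> j" "g i = g j"
    unfolding inj_on_def by auto
  then show ?thesis
    using that[of i j] that[of j i] by (cases "i < j") auto
qed

lemma lang_imp_path:
  "w \<in> lang A \<Longrightarrow> \<exists>f. is_path A f w \<and> f 0 \<in> init A \<and> f (length w) \<in> final A"
  unfolding lang_def by (blast dest: run_imp_path)

lemma cyclic_langs_common_pumping:
  assumes "wf_nfa A1" "wf_nfa A2" "card (states A1) \<le> m" "card (states A2) \<le> m"
    and "cyclic A1" "cyclic A2" "x1 \<in> lang A1" "x2 \<in> lang A2" "m^2 \<le> length x1" "m^2 \<le> length x2"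
    and "0 < d" "d dvd length x1" "d dvd length x2"
  obtains e x1' x2' where "0 < e" "e \<le> m^2"
    "x1' \<in> lang A1" "d dvd length x1'" "residue_letters d 0 x1' = shifted_residue_letters d e x1"
    "x2' \<in> lang A2" "d dvd length x2'" "residue_letters d 0 x2' = shifted_residue_letters d e x2"
proof -
  obtain f1 where f1: "is_path A1 f1 x1" "f1 0 \<in> init A1" "f1 (length x1) \<in> final A1"
    using lang_imp_path[OF assms(7)] by blast
  obtain f2 where f2: "is_path A2 f2 x2" "f2 0 \<in> init A2" "f2 (length x2) \<in> final A2"
    using lang_imp_path[OF assms(8)] by blast
  have "finite (states A1 \<times> states A2)"
    using assms(1,2) by (simp add: wf_nfa_def)
  moreover have "card (states A1 \<times> states A2) \<le> m^2"
    using assms(3,4) by (simp add: card_cartesian_product power2_eq_square mult_le_mono)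
  moreover have "\<forall>k \<le> m^2. (f1 k, f2 k) \<in> states A1 \<times> states A2"
    using is_path_in_states[OF assms(1) f1(1)] is_path_in_states[OF assms(2) f2(1)] f1(2) f2(2)
      assms(1,2,9,10) by (auto simp: wf_nfa_def)
  ultimately obtain i j where "i < j" "j \<le> m^2" "(f1 i, f2 i) = (f1 j, f2 j)"
    by (rule pigeonhole_nat_prefix)
  then have ij: "i < j" "j \<le> m^2" "f1 i = f1 j" "f2 i = f2 j"
    by simp_all
  obtain x1' where "x1' \<in> lang A1" "d dvd length x1'"
    "residue_letters d 0 x1' = shifted_residue_letters d (j - i) x1"
    using cyclic_lang_pumping[OF assms(5) f1, of i j d] ij assms(9,11,12) by auto
  moreover obtain x2' where "x2' \<in> lang A2" "d dvd length x2'"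
    "residue_letters d 0 x2' = shifted_residue_letters d (j - i) x2"
    using cyclic_lang_pumping[OF assms(6) f2, of i j d] ij assms(10,11,13) by auto
  ultimately show ?thesis
    using that[of "j - i"] ij by auto
qed

lemma cyclic_down_star_word_in_Adh_d:
  assumes "cyclic A" "x \<in> lang A" "d dvd length x" "d dvd length w"
    and "residue_letters d 0 x = residue_letters d 0 w"
  shows "down_d d (star_word w) \<in> Adh_d d (lang A)"
proof (rule down_d_star_word_in_Adh_d[OF assms(4,3,5)])
  show "concat (replicate n x) \<in> lang A" for n
    using assms(1,2) by (intro cyclic_concat_in_lang) auto
qed

lemma cyclic_langs_periodic_adherent_word:
  assumes "wf_nfa A1" "wf_nfa A2" "card (states A1) \<le> m" "card (states A2) \<le> m"
    and "cyclic A1" "cyclic A2" "0 < d" "d dvd length v" "m^2 \<le> length v"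
    and "down_d d (star_word v) \<in> Adh_d d (lang A1)" "down_d d (star_word v) \<in> Adh_d d (lang A2)"
  obtains e w where "0 < e" "e \<le> m^2" "d dvd length w"
    "residue_letters d 0 v \<le> residue_letters d 0 w"
    "\<And>r. residue_letters d 0 w (r + e) = residue_letters d 0 w r"
    "down_d d (star_word w) \<in> Adh_d d (lang A1)" "down_d d (star_word w) \<in> Adh_d d (lang A2)"
proof -
  obtain x1 where x1: "x1 \<in> lang A1" "d dvd length x1" "length v \<le> length x1"
    "residue_letters d 0 x1 = residue_letters d 0 v"
    using Adh_d_down_star_word_witness[OF assms(8,10)] by blast
  obtain x2 where x2: "x2 \<in> lang A2" "d dvd length x2" "length v \<le> length x2"
    "residue_letters d 0 x2 = residue_letters d 0 v"
    using Adh_d_down_star_word_witness[OF assms(8,11)] by blast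
  have "m^2 \<le> length x1" "m^2 \<le> length x2"
    using assms(9) x1(3) x2(3) by linarith+
  then obtain e w x2' where e: "0 < e" "e \<le> m^2"
    and w: "w \<in> lang A1" "d dvd length w" "residue_letters d 0 w = shifted_residue_letters d e x1"
    and x2': "x2' \<in> lang A2" "d dvd length x2'" "residue_letters d 0 x2' = shifted_residue_letters d e x2"
    by (rule cyclic_langs_common_pumping[OF assms(1-6) x1(1) x2(1) _ _ assms(7) x1(2) x2(2)])
  have "shifted_residue_letters d e x2 = shifted_residue_letters d e x1"
    using shifted_residue_letters_eq[OF assms(7), of x2 x1] x1(4) x2(4) by simp
  then have x2'_w: "residue_letters d 0 x2' = residue_letters d 0 w"
    using x2'(3) w(3) by simp
  show ?thesis
  proof (rule that[OF e w(2)])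
    show "residue_letters d 0 v \<le> residue_letters d 0 w"
      using residue_letters_le_shifted[of d x1 e] w(3) x1(4) by simp
    show "residue_letters d 0 w (r + e) = residue_letters d 0 w r" for r
      by (simp add: w(3) shifted_residue_letters_period[OF assms(7)])
    show "down_d d (star_word w) \<in> Adh_d d (lang A1)"
      by (rule cyclic_down_star_word_in_Adh_d[OF assms(5) w(1,2,2)]) simp
    show "down_d d (star_word w) \<in> Adh_d d (lang A2)"
      by (rule cyclic_down_star_word_in_Adh_d[OF assms(6) x2'(1,2) w(2) x2'_w])
  qed
qed

theorem mainTheorem14:
  fixes A1 :: "('q1, 'a::finite) nfa" and A2 :: "('q2, 'a) nfa"
    and m d :: nat and v :: "'a list"
  assumes "wf_nfa A1" "wf_nfa A2"
    and "cyclic A1" "cyclic A2"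
    and "card (states A1) \<le> m" "card (states A2) \<le> m"
    and "0 < d" "fact (m^2) dvd d"
    and "d dvd length v"
    and "down_d d (star_word v) \<in> Adh_d d (lang A1)"
    and "down_d d (star_word v) \<in> Adh_d d (lang A2)"
  shows "\<exists>w. d dvd length w
    \<and> down_d d (star_word v) \<subseteq> down_d d (star_word w)
    \<and> down_d d (star_word w) \<in> Adh_d d (lang A1)
    \<and> down_d d (star_word w) \<in> Adh_d d (lang A2)
    \<and> pi_d d w \<le> m^2"
proof (cases "v = []")
  case True
  have "pi_d d [] \<le> 1"
    using assms(7) by (intro pi_d_le_period) auto
  also have "1 \<le> m^2"
    using card_states_ge_1[OF assms(1,3)] assms(5) by simp
  finally show ?thesis
    using True assms(10,11) by (intro exI[of _ "[]"]) auto
next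
  case False
  have "m^2 \<le> length v"
    using fact_ge_self[of "m^2"] dvd_imp_le[OF assms(8,7)] dvd_imp_le[OF assms(9)] False by simp
  then obtain e w where e: "0 < e" "e \<le> m^2" and w: "d dvd length w"
    "residue_letters d 0 v \<le> residue_letters d 0 w"
    "\<And>r. residue_letters d 0 w (r + e) = residue_letters d 0 w r"
    "down_d d (star_word w) \<in> Adh_d d (lang A1)" "down_d d (star_word w) \<in> Adh_d d (lang A2)"
    using cyclic_langs_periodic_adherent_word[OF assms(1,2,5,6,3,4,7,9) _ assms(10,11)] by blast
  have "e dvd d"
    using dvd_trans[OF dvd_fact[of e "m^2"] assms(8)] e by simp
  with assms(7) e(1) have "pi_d d w \<le> e"
    by (rule pi_d_le_period) (fact w(3))
  then show ?thesis
    using w e(2) down_d_star_word_mono[OF assms(9) w(1,2)] by (intro exI[of _ w]) auto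
qed

end
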